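(* Define the relation $\succeq^3$ on $\mathcal{A}$ by $\mathbf{A}\succeq^3\mathbf{B}\iff\kappa(\mathbf{A})\le\kappa(\mathbf{B})$, where for $\mathbf{A}=[a_{ij}]$ of size $n$, $\kappa(\mathbf{A})=\max_{1\le i<j<k\le n}\max\{a_{jk}^2/a_{ik},\ a_{ik}/a_{jk}^2\}$. Then $\succeq^3$ is an inconsistency ranking that satisfies PR, IIP, SI, MON and RED, but does not satisfy HTE.
   Context: A pairwise comparison matrix of size $n$ is a matrix $\mathbf{A}=[a_{ij}]\in\mathbb{R}^{n\times n}$ with all entries positive and $a_{ji}=1/a_{ij}$ for all $i,j$. Let $\mathcal{A}$ denote the set of all pairwise comparison matrices of all sizes $n\ge 3$. For $\mathbf{A}\in\mathcal{A}$ of size $n$ and $3\le m\le n$, a submatrix of $\mathbf{A}$ is a matrix $\mathbf{B}=[b_{ij}]$ of size $m$ with $b_{ij}=a_{\sigma(i)\sigma(j)}$ for some strictly increasing map $\sigma:\{1,\dots,m\}\to\{1,\dots,n\}$. A triad is a pairwise comparison matrix of size $3$; a triad of $\mathbf{A}$ is a submatrix of $\mathbf{A}$ of size $3$ (when $n=3$, $\mathbf{A}$ is its own unique triad). A triad $\mathbf{T}$ is written $\mathbf{T}=(t_1;t_2;t_3)$, meaning $t_{12}=t_1$, $t_{13}=t_2$, $t_{23}=t_3$ (the remaining entries are determined by reciprocity); $\mathbf{T}^\top$ denotes its transpose, i.e. the triad $(1/t_1;1/t_2;1/t_3)$. An inconsistency ranking is a complete and transitive binary relation $\succeq$ on $\mathcal{A}$;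 $\mathbf{A}\sim\mathbf{B}$ means $\mathbf{A}\succeq\mathbf{B}$ and $\mathbf{B}\succeq\mathbf{A}$; $\mathbf{A}\preceq\mathbf{B}$ means $\mathbf{B}\succeq\mathbf{A}$. Properties of an inconsistency ranking $\succeq$: (PR) for all $s_2,t_2\ge 1$: $(1;s_2;1)\succeq(1;t_2;1)\iff s_2\le t_2$. (IIP) $\mathbf{T}\sim\mathbf{T}^\top$ for every triad $\mathbf{T}$. (HTE) $(1;t_2;t_3)\sim(1;t_2/t_3;1)$ for all $t_2,t_3>0$. (SI) $(t_1;t_2;t_3)\sim(kt_1;k^2t_2;kt_3)$ for all $t_1,t_2,t_3>0$ and all $k>0$. (MON) $\mathbf{A}\preceq\mathbf{T}$ for every $\mathbf{A}\in\mathcal{A}$ and every triad $\mathbf{T}$ of $\mathbf{A}$. (RED) every $\mathbf{A}\in\mathcal{A}$ has a triad $\mathbf{T}$ with $\mathbf{A}\sim\mathbf{T}$. *)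

theory Defs
  imports Main Complex_Main
begin

text \<open>A matrix of size n is represented as a pair (n, a) with entries a i j for
  0 \<le> i, j < n (0-based indices). Entries outside the index range are normalised to 1,
  so that each matrix has a unique representation.\<close>

type_synonym pcm = "nat \<times> (nat \<Rightarrow> nat \<Rightarrow> real)"

definition is_pcm :: "pcm \<Rightarrow> bool" where
  "is_pcm A \<longleftrightarrow> (let n = fst A; a = snd A in
     (\<forall>i<n. \<forall>j<n. a i j > 0 \<and> a j i = 1 / a i j) \<and>
     (\<forall>i j. (i \<ge> n \<or> j \<ge> n) \<longrightarrow> a i j = 1))"

definition PCMs :: "pcm set" where
  "PCMs = {A. fst A \<ge> 3 \<and> is_pcm A}"

definition submatrix :: "pcm \<Rightarrow> nat \<Rightarrow> (nat \<Rightarrow> nat) \<Rightarrow> pcm" where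
  "submatrix A m \<sigma> = (m, \<lambda>i j. if i < m \<and> j < m then snd A (\<sigma> i) (\<sigma> j) else 1)"

definition is_submatrix :: "pcm \<Rightarrow> pcm \<Rightarrow> bool" where
  "is_submatrix B A \<longleftrightarrow> (\<exists>m \<sigma>. 3 \<le> m \<and> m \<le> fst A \<and>
     (\<forall>i j. i < j \<and> j < m \<longrightarrow> \<sigma> i < \<sigma> j) \<and> (\<forall>i<m. \<sigma> i < fst A) \<and>
     B = submatrix A m \<sigma>)"

text \<open>The triad (t1; t2; t3): t_12 = t1, t_13 = t2, t_23 = t3 (1-based), i.e.
  entries (0,1), (0,2), (1,2) in 0-based indexing.\<close>
definition triad :: "real \<Rightarrow> real \<Rightarrow> real \<Rightarrow> pcm" where
  "triad t1 t2 t3 = (3, \<lambda>i j.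
     if i = 0 \<and> j = 1 then t1 else if i = 1 \<and> j = 0 then 1 / t1
     else if i = 0 \<and> j = 2 then t2 else if i = 2 \<and> j = 0 then 1 / t2
     else if i = 1 \<and> j = 2 then t3 else if i = 2 \<and> j = 1 then 1 / t3
     else 1)"

definition is_triad_of :: "pcm \<Rightarrow> pcm \<Rightarrow> bool" where
  "is_triad_of T A \<longleftrightarrow> is_submatrix T A \<and> fst T = 3"

definition inconsistency_ranking :: "(pcm \<Rightarrow> pcm \<Rightarrow> bool) \<Rightarrow> bool" where
  "inconsistency_ranking R \<longleftrightarrow>
     (\<forall>A\<in>PCMs. \<forall>B\<in>PCMs. R A B \<or> R B A) \<and>
     (\<forall>A\<in>PCMs. \<forall>B\<in>PCMs. \<forall>C\<in>PCMs. R A B \<and> R B C \<longrightarrow> R A C)"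

definition rank_eq :: "(pcm \<Rightarrow> pcm \<Rightarrow> bool) \<Rightarrow> pcm \<Rightarrow> pcm \<Rightarrow> bool" where
  "rank_eq R A B \<longleftrightarrow> R A B \<and> R B A"

definition prop_PR :: "(pcm \<Rightarrow> pcm \<Rightarrow> bool) \<Rightarrow> bool" where
  "prop_PR R \<longleftrightarrow> (\<forall>s2 t2. s2 \<ge> 1 \<and> t2 \<ge> 1 \<longrightarrow>
     (R (triad 1 s2 1) (triad 1 t2 1) \<longleftrightarrow> s2 \<le> t2))"

definition prop_IIP :: "(pcm \<Rightarrow> pcm \<Rightarrow> bool) \<Rightarrow> bool" where
  "prop_IIP R \<longleftrightarrow> (\<forall>t1 t2 t3. t1 > 0 \<and> t2 > 0 \<and> t3 > 0 \<longrightarrow>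
     rank_eq R (triad t1 t2 t3) (triad (1/t1) (1/t2) (1/t3)))"

definition prop_HTE :: "(pcm \<Rightarrow> pcm \<Rightarrow> bool) \<Rightarrow> bool" where
  "prop_HTE R \<longleftrightarrow> (\<forall>t2 t3. t2 > 0 \<and> t3 > 0 \<longrightarrow>
     rank_eq R (triad 1 t2 t3) (triad 1 (t2/t3) 1))"

definition prop_SI :: "(pcm \<Rightarrow> pcm \<Rightarrow> bool) \<Rightarrow> bool" where
  "prop_SI R \<longleftrightarrow> (\<forall>t1 t2 t3 k. t1 > 0 \<and> t2 > 0 \<and> t3 > 0 \<and> k > 0 \<longrightarrow>
     rank_eq R (triad t1 t2 t3) (triad (k*t1) (k^2*t2) (k*t3)))"

definition prop_MON :: "(pcm \<Rightarrow> pcm \<Rightarrow> bool) \<Rightarrow> bool" where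
  "prop_MON R \<longleftrightarrow> (\<forall>A\<in>PCMs. \<forall>T. is_triad_of T A \<longrightarrow> R T A)"

definition prop_RED :: "(pcm \<Rightarrow> pcm \<Rightarrow> bool) \<Rightarrow> bool" where
  "prop_RED R \<longleftrightarrow> (\<forall>A\<in>PCMs. \<exists>T. is_triad_of T A \<and> rank_eq R A T)"

definition kappa :: "pcm \<Rightarrow> real" where
  "kappa A = Max {max ((snd A j k)^2 / snd A i k) (snd A i k / (snd A j k)^2) | i j k.
                  i < j \<and> j < k \<and> k < fst A}"

definition rank3 :: "pcm \<Rightarrow> pcm \<Rightarrow> bool" where
  "rank3 A B \<longleftrightarrow> kappa A \<le> kappa B"

end

theory Submission
  imports Defs
begin

text \<open>The index \<kappa> is a maximum of a triad-level inconsistency over all triads of a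
  matrix, so every triad is at most as inconsistent as the matrix (MON) and a maximising triad
  is exactly as inconsistent (RED). On a triad (t1; t2; t3) the index is
  max (t3^2 / t2) (t2 / t3^2): it is symmetric under inverting the entries (IIP), invariant under
  (t1; t2; t3) \<mapsto> (k t1; k^2 t2; k t3) (SI), and equals t2 on (1; t2; 1) for t2 \<ge> 1 (PR).
  HTE fails because (1; 1; 2) has index 4 while (1; 1/2; 1) has index 2.\<close>

definition triple_inconsistency :: "pcm \<Rightarrow> nat \<Rightarrow> nat \<Rightarrow> nat \<Rightarrow> real" where
  "triple_inconsistency A i j k = max ((snd A j k)^2 / snd A i k) (snd A i k / (snd A j k)^2)"

definition increasing_triples :: "nat \<Rightarrow> (nat \<times> nat \<times> nat) set" where
  "increasing_triples n = {(i, j, k). i < j \<and> j < k \<and> k < n}"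

lemma finite_increasing_triples: "finite (increasing_triples n)"
proof (rule finite_subset)
  show "increasing_triples n \<subseteq> {..<n} \<times> {..<n} \<times> {..<n}"
    unfolding increasing_triples_def by auto
qed auto

lemma increasing_triples_3: "increasing_triples 3 = {(0, 1, 2)}"
  unfolding increasing_triples_def by auto

lemma kappa_eq_Max_triples:
  "kappa A = Max ((\<lambda>(i, j, k). triple_inconsistency A i j k) ` increasing_triples (fst A))"
proof -
  have "{max ((snd A j k)^2 / snd A i k) (snd A i k / (snd A j k)^2) | i j k.
           i < j \<and> j < k \<and> k < fst A}
        = (\<lambda>(i, j, k). triple_inconsistency A i j k) ` increasing_triples (fst A)"
    unfolding triple_inconsistency_def increasing_triples_def by (auto simp: image_def)
  then show ?thesis
    unfolding kappa_def by simp
qed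

lemma triple_inconsistency_le_kappa:
  "(i, j, k) \<in> increasing_triples (fst A) \<Longrightarrow> triple_inconsistency A i j k \<le> kappa A"
  unfolding kappa_eq_Max_triples
  by (rule Max_ge) (auto intro: finite_increasing_triples image_eqI[where x = "(i, j, k)"])

lemma kappa_attained:
  assumes "fst A \<ge> 3"
  obtains i j k where "(i, j, k) \<in> increasing_triples (fst A)"
    and "kappa A = triple_inconsistency A i j k"
proof -
  let ?S = "(\<lambda>(i, j, k). triple_inconsistency A i j k) ` increasing_triples (fst A)"
  have "(0, 1, 2) \<in> increasing_triples (fst A)"
    using assms unfolding increasing_triples_def by auto
  then have "?S \<noteq> {}" by blast
  then have "kappa A \<in> ?S"
    unfolding kappa_eq_Max_triples by (intro Max_in) (simp_all add: finite_increasing_triples)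
  then show ?thesis
    using that by auto
qed

lemma kappa_size_3: "fst T = 3 \<Longrightarrow> kappa T = triple_inconsistency T 0 1 2"
  by (simp add: kappa_eq_Max_triples increasing_triples_3)

lemma kappa_triad: "kappa (triad t1 t2 t3) = max (t3^2 / t2) (t2 / t3^2)"
  by (simp add: kappa_size_3 triad_def triple_inconsistency_def)

lemma kappa_triad_submatrix:
  "kappa (submatrix A 3 \<sigma>) = triple_inconsistency A (\<sigma> 0) (\<sigma> 1) (\<sigma> 2)"
  by (simp add: kappa_size_3 submatrix_def triple_inconsistency_def)

lemma is_triad_of_submatrix:
  fixes i j k :: nat
  defines "\<sigma> \<equiv> \<lambda>x. if x = 0 then i else if x = 1 then j else k"
  assumes "(i, j, k) \<in> increasing_triples (fst A)"
  shows "is_triad_of (submatrix A 3 \<sigma>) A"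
  unfolding is_triad_of_def is_submatrix_def
proof (intro conjI exI[of _ 3] exI[of _ \<sigma>])
  show "\<forall>x y. x < y \<and> y < 3 \<longrightarrow> \<sigma> x < \<sigma> y" "\<forall>x<3. \<sigma> x < fst A" "3 \<le> fst A"
    using assms unfolding increasing_triples_def by (auto simp: less_Suc_eq numeral_3_eq_3)
qed (simp_all add: submatrix_def)

lemma is_triad_of_obtain_triple:
  assumes "is_triad_of T A"
  obtains i j k where "(i, j, k) \<in> increasing_triples (fst A)"
    and "kappa T = triple_inconsistency A i j k"
proof -
  from assms obtain m \<sigma> where "m \<le> fst A"
    and increasing: "\<forall>i j. i < j \<and> j < m \<longrightarrow> \<sigma> i < \<sigma> j"
    and bounded: "\<forall>i<m. \<sigma> i < fst A"
    and T: "T = submatrix A m \<sigma>" and "fst T = 3"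
    unfolding is_triad_of_def is_submatrix_def by blast
  then have "m = 3" by (simp add: submatrix_def)
  have "(\<sigma> 0, \<sigma> 1, \<sigma> 2) \<in> increasing_triples (fst A)"
    using increasing bounded \<open>m = 3\<close> unfolding increasing_triples_def by auto
  moreover have "kappa T = triple_inconsistency A (\<sigma> 0) (\<sigma> 1) (\<sigma> 2)"
    using T \<open>m = 3\<close> by (simp add: kappa_triad_submatrix)
  ultimately show ?thesis
    using that by blast
qed

lemma inconsistency_ranking_of_index: "inconsistency_ranking (\<lambda>A B. f A \<le> (f B :: real))"
  unfolding inconsistency_ranking_def by auto

lemma prop_PR_rank3: "prop_PR rank3"
proof -
  have "kappa (triad 1 s 1) = s" if "s \<ge> 1" for s :: real
  proof -
    have "1 / s \<le> s"
      using that by (smt (verit) divide_le_eq_1)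
    then show ?thesis
      by (simp add: kappa_triad)
  qed
  then show ?thesis
    unfolding prop_PR_def rank3_def by auto
qed

lemma prop_IIP_rank3: "prop_IIP rank3"
  unfolding prop_IIP_def rank_eq_def rank3_def kappa_triad
  by (auto simp: power_divide max.commute)

lemma prop_SI_rank3: "prop_SI rank3"
  unfolding prop_SI_def rank_eq_def rank3_def kappa_triad
  by (auto simp: power_mult_distrib power2_eq_square)

lemma prop_MON_rank3: "prop_MON rank3"
  unfolding prop_MON_def rank3_def
  by (metis is_triad_of_obtain_triple triple_inconsistency_le_kappa)

lemma prop_RED_rank3: "prop_RED rank3"
  unfolding prop_RED_def
proof
  fix A assume "A \<in> PCMs"
  then have "fst A \<ge> 3" by (simp add: PCMs_def)
  then obtain i j k where ijk: "(i, j, k) \<in> increasing_triples (fst A)"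
    and "kappa A = triple_inconsistency A i j k"
    by (rule kappa_attained)
  then show "\<exists>T. is_triad_of T A \<and> rank_eq rank3 A T"
    using is_triad_of_submatrix[OF ijk]
    by (intro exI conjI) (auto simp: rank_eq_def rank3_def kappa_triad_submatrix)
qed

lemma not_prop_HTE_rank3: "\<not> prop_HTE rank3"
proof
  assume "prop_HTE rank3"
  then have "rank_eq rank3 (triad 1 1 2) (triad 1 (1/2) 1)"
    unfolding prop_HTE_def by force
  then show False
    by (simp add: rank_eq_def rank3_def kappa_triad)
qed

theorem mainTheorem4:
  shows "inconsistency_ranking rank3 \<and> prop_PR rank3 \<and> prop_IIP rank3 \<and>
         prop_SI rank3 \<and> prop_MON rank3 \<and> prop_RED rank3 \<and> \<not> prop_HTE rank3"
  using inconsistency_ranking_of_index[of kappa] prop_PR_rank3 prop_IIP_rank3 prop_SI_rank3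
    prop_MON_rank3 prop_RED_rank3 not_prop_HTE_rank3
  unfolding rank3_def[abs_def] by simp

end
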